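(* Let $M\ge1$. If $\mathbf a\in\mathcal A_M$ and $\mathbf b\in\mathcal A_1$, then $\mathbf a\circ\mathbf b\in\mathcal A_M$.
   Context: Order and word operations. Sequences and words over $\{0,\dots,M\}$ are ordered lexicographically. Words are compared via $\mathbf c\prec\mathbf d$ iff $\mathbf c0^\infty\prec\mathbf d0^\infty$. For a word $c_1\dots c_k$: - if $c_k<M$, then $c_1\dots c_k^+=c_1\dots c_{k-1}(c_k+1)$; - if $c_k>0$, then $c_1\dots c_k^-=c_1\dots c_{k-1}(c_k-1)$; - the reflection is $\overline{c_1\dots c_k}=(M-c_1)\dots(M-c_k)$. Fundamental words. A word $a_1\dots a_m$ ($m\ge2$) over $\{0,\dots,M\}$ is fundamental if $\overline{a_1\dots a_{m-i}}\preceq a_{i+1}\dots a_m\prec a_1\dots a_{m-i}$ for all $1\le i<m$. When $M\ge2$, a one-letter word $a_1$ is fundamental if $M-a_1\le a_1<M$. $\mathcal A_M$ denotes the set of fundamental words over $\{0,\dots,M\}$, and $\mathcal A_1$ the set for $M=1$ (these all begin with $1$). The graph and labelings. For $\mathbf a\in\mathcal A_M$, let $G$ have vertices Start, $A$, $B$ and edges - $e_0$: Start$\to A$, - $e_1$: $A\to B$, - $e_2$: $B\to B$, - $e_3$: $B\to A$, - $e_4$: $A\to A$. Label them by - $\mathcal L_{\mathbf a}$: $e_0,e_3\mapsto\mathbf a^+$; $e_1\mapsto\overline{\mathbf a^+}$; $e_2\mapsto\mathbf a$; $e_4\mapsto\overline{\mathbf a}$; - $\mathcal L^*$: $e_0,e_3,e_4\mapsto1$;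 $e_1,e_2\mapsto0$. The map $\Phi_{\mathbf a}$. For a path $e_{i_1}\dots e_{i_k}$ with $i_1=0$, set $\Phi_{\mathbf a}(\mathcal L_{\mathbf a}(e_{i_1})\cdots\mathcal L_{\mathbf a}(e_{i_k}))=\mathcal L^*(e_{i_1}\dots e_{i_k})$. This gives a bijection between such block words and binary words beginning with $1$. Composition. For $\mathbf a\in\mathcal A_M$ and $\mathbf b\in\mathcal A_1$, the composition $\mathbf a\circ\mathbf b:=\Phi_{\mathbf a}^{-1}(\mathbf b)$ is the unique such block word (of length $|\mathbf a||\mathbf b|$) mapped to $\mathbf b$. *)

theory Defs
  imports Main
begin

text \<open>Words over the alphabet {0,...,M} are lists of naturals. Words are compared
  lexicographically after padding with 0 to infinite sequences.\<close>

definition pad :: "nat list \<Rightarrow> nat \<Rightarrow> nat" where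
  "pad c i = (if i < length c then c ! i else 0)"

definition word_less :: "nat list \<Rightarrow> nat list \<Rightarrow> bool" where
  "word_less c d \<longleftrightarrow> (\<exists>n. (\<forall>i<n. pad c i = pad d i) \<and> pad c n < pad d n)"

definition word_le :: "nat list \<Rightarrow> nat list \<Rightarrow> bool" where
  "word_le c d \<longleftrightarrow> word_less c d \<or> pad c = pad d"

definition word_refl :: "nat \<Rightarrow> nat list \<Rightarrow> nat list" where
  "word_refl M c = map (\<lambda>x. M - x) c"

text \<open>c^+ : increase the last letter by one (only used when the last letter is < M).\<close>
definition word_plus :: "nat list \<Rightarrow> nat list" where
  "word_plus c = butlast c @ [last c + 1]"

definition fundamental :: "nat \<Rightarrow> nat list \<Rightarrow> bool" where
  "fundamental M a \<longleftrightarrow>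
     a \<noteq> [] \<and> set a \<subseteq> {0..M} \<and>
     (if length a = 1 then 2 \<le> M \<and> M - a ! 0 \<le> a ! 0 \<and> a ! 0 < M
      else (\<forall>i. 1 \<le> i \<and> i < length a \<longrightarrow>
              word_le (word_refl M (take (length a - i) a)) (drop i a) \<and>
              word_less (drop i a) (take (length a - i) a)))"

datatype vertex = Start | VA | VB
datatype edge = E0 | E1 | E2 | E3 | E4

fun esrc :: "edge \<Rightarrow> vertex" where
  "esrc E0 = Start" | "esrc E1 = VA" | "esrc E2 = VB" | "esrc E3 = VB" | "esrc E4 = VA"

fun etgt :: "edge \<Rightarrow> vertex" where
  "etgt E0 = VA" | "etgt E1 = VB" | "etgt E2 = VB" | "etgt E3 = VA" | "etgt E4 = VA"

definition is_path :: "edge list \<Rightarrow> bool" where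
  "is_path p \<longleftrightarrow> p \<noteq> [] \<and> (\<forall>j. Suc j < length p \<longrightarrow> etgt (p ! j) = esrc (p ! Suc j))"

fun label_a :: "nat \<Rightarrow> nat list \<Rightarrow> edge \<Rightarrow> nat list" where
  "label_a M a E0 = word_plus a"
| "label_a M a E3 = word_plus a"
| "label_a M a E1 = word_refl M (word_plus a)"
| "label_a M a E2 = a"
| "label_a M a E4 = word_refl M a"

fun label_star :: "edge \<Rightarrow> nat" where
  "label_star E0 = 1" | "label_star E3 = 1" | "label_star E4 = 1"
| "label_star E1 = 0" | "label_star E2 = 0"

text \<open>Composition a \<circ> b = \<Phi>_a^{-1}(b): the block word L_a(p) of the path p starting with e0
  whose L^*-label is b.\<close>
definition compose :: "nat \<Rightarrow> nat list \<Rightarrow> nat list \<Rightarrow> nat list" where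
  "compose M a b = (THE w. \<exists>p. is_path p \<and> hd p = E0 \<and> map label_star p = b \<and>
                              w = concat (map (label_a M a) p))"

end

theory Submission
  imports Defs
begin

(* The word a \<circ> b is a concatenation of blocks: between consecutive letters x, y of 0b stands
   a, a^+, refl(a^+) or refl(a) for (x, y) = (0,0), (0,1), (1,0), (1,1), and these blocks satisfy
   refl(a^+) < refl(a) \<le> a < a^+.  A shift of a \<circ> b by q|a| compares two block sequences
   block by block, so it reduces to the shift of b by q.  A shift by q|a| + r with 0 < r < |a|
   starts with a window of length |a| straddling a block boundary; the shift conditions of a place
   every such window strictly between refl(a^+) and a^+, while a \<circ> b itself starts with a^+.
   Reflecting a block word reflects the underlying binary word, which turns each upper bound into
   the matching lower bound. *)

lemma pad_Nil [simp]: "pad [] i = 0"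
  and pad_Cons_0 [simp]: "pad (x # xs) 0 = x"
  and pad_Cons_Suc [simp]: "pad (x # xs) (Suc i) = pad xs i"
  by (simp_all add: pad_def)

lemma word_less_Cons: "word_less (x # xs) (y # ys) \<longleftrightarrow> x < y \<or> x = y \<and> word_less xs ys"
proof
  assume "word_less (x # xs) (y # ys)"
  then obtain n where eq: "\<forall>i<n. pad (x # xs) i = pad (y # ys) i"
    and less: "pad (x # xs) n < pad (y # ys) n"
    unfolding word_less_def by blast
  show "x < y \<or> x = y \<and> word_less xs ys"
  proof (cases n)
    case (Suc n')
    then have "x = y" using eq by (metis pad_Cons_0 zero_less_Suc)
    moreover have "word_less xs ys"
      unfolding word_less_def using eq less Suc by (intro exI[of _ n']) auto
    ultimately show ?thesis by simp
  qed (use less in simp)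
next
  assume "x < y \<or> x = y \<and> word_less xs ys"
  then show "word_less (x # xs) (y # ys)"
  proof
    assume "x < y"
    then show ?thesis unfolding word_less_def by (intro exI[of _ 0]) simp
  next
    assume "x = y \<and> word_less xs ys"
    then obtain n where "x = y" "\<forall>i<n. pad xs i = pad ys i" "pad xs n < pad ys n"
      unfolding word_less_def by blast
    then show ?thesis
      unfolding word_less_def by (intro exI[of _ "Suc n"]) (auto simp: less_Suc_eq_0_disj)
  qed
qed

lemma word_less_iff_lexordp: "length c = length d \<Longrightarrow> word_less c d \<longleftrightarrow> ord_class.lexordp c d"
proof (induction c d rule: list_induct2)
  case Nil
  then show ?case by (simp add: word_less_def)
next
  case (Cons x xs y ys)
  then show ?case by (auto simp: word_less_Cons)
qed

lemma pad_inject: "length c = length d \<Longrightarrow> pad c = pad d \<longleftrightarrow> c = d"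
  by (auto simp: pad_def fun_eq_iff intro: nth_equalityI)

lemma word_le_iff_lexordp_eq: "length c = length d \<Longrightarrow> word_le c d \<longleftrightarrow> lexordp_eq c d"
  by (auto simp: word_le_def word_less_iff_lexordp pad_inject lexordp_eq_conv_lexord)

lemma lexordp_append_same_length:
  "length u = length v \<Longrightarrow>
   ord_class.lexordp (u @ u') (v @ v') \<longleftrightarrow> ord_class.lexordp u v \<or> u = v \<and> ord_class.lexordp u' v'"
  for u v :: "'a::linorder list"
  by (induction u v rule: list_induct2) auto

lemma word_refl_Nil [simp]: "word_refl M [] = []"
  and word_refl_Cons [simp]: "word_refl M (c # cs) = (M - c) # word_refl M cs"
  by (simp_all add: word_refl_def)

lemma length_word_refl [simp]: "length (word_refl M x) = length x"
  and word_refl_append: "word_refl M (x @ y) = word_refl M x @ word_refl M y"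
  and take_word_refl: "take n (word_refl M x) = word_refl M (take n x)"
  and drop_word_refl: "drop n (word_refl M x) = word_refl M (drop n x)"
  and word_refl_atMost: "set (word_refl M x) \<subseteq> {..M}"
  by (auto simp: word_refl_def take_map drop_map)

lemma word_refl_word_refl: "set x \<subseteq> {..M} \<Longrightarrow> word_refl M (word_refl M x) = x"
  by (induction x) auto

lemma lexordp_word_refl:
  "length x = length y \<Longrightarrow> set y \<subseteq> {..M} \<Longrightarrow> ord_class.lexordp x y \<Longrightarrow>
   ord_class.lexordp (word_refl M y) (word_refl M x)"
  by (induction x y rule: list_induct2) auto

lemma lexordp_eq_word_refl:
  "length x = length y \<Longrightarrow> set y \<subseteq> {..M} \<Longrightarrow> lexordp_eq x y \<Longrightarrow>
   lexordp_eq (word_refl M y) (word_refl M x)"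
  using lexordp_word_refl by (auto simp: lexordp_eq_conv_lexord)

lemma lexordp_eq_word_refl_swap:
  assumes "lexordp_eq (word_refl M x) y"
    and "length x = length y" "set x \<subseteq> {..M}" "set y \<subseteq> {..M}"
  shows "lexordp_eq (word_refl M y) x"
  using lexordp_eq_word_refl[of "word_refl M x" y M] assms word_refl_word_refl[of x M] by simp

lemma length_word_plus [simp]: "xs \<noteq> [] \<Longrightarrow> length (word_plus xs) = length xs"
  and take_word_plus: "n < length xs \<Longrightarrow> take n (word_plus xs) = take n xs"
  and drop_word_plus: "n < length xs \<Longrightarrow> drop n (word_plus xs) = word_plus (drop n xs)"
  by (simp_all add: word_plus_def take_butlast butlast_drop)

lemma word_plus_atMost: "set x \<subseteq> {..M} \<Longrightarrow> last x < M \<Longrightarrow> set (word_plus x) \<subseteq> {..M}"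
  by (auto simp: word_plus_def dest: in_set_butlastD)

lemma lexordp_word_plus: "x \<noteq> [] \<Longrightarrow> ord_class.lexordp x (word_plus x)"
  by (induction x rule: list_nonempty_induct) (auto simp: word_plus_def)

lemma lexordp_eq_word_plus_if_lexordp:
  "length x = length y \<Longrightarrow> x \<noteq> [] \<Longrightarrow> ord_class.lexordp x y \<Longrightarrow> lexordp_eq (word_plus x) y"
  by (induction x y rule: list_induct2) (auto simp: word_plus_def lexordp_into_lexordp_eq)

definition shift_bounded :: "nat \<Rightarrow> nat list \<Rightarrow> nat \<Rightarrow> bool" where
  "shift_bounded M w i \<longleftrightarrow>
     lexordp_eq (word_refl M (take (length w - i) w)) (drop i w) \<and>
     ord_class.lexordp (drop i w) (take (length w - i) w)"

lemma fundamentalD: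
  assumes "fundamental M a"
  shows "a \<noteq> []" and "set a \<subseteq> {..M}"
  using assms by (auto simp: fundamental_def)

lemma fundamental_shift_bounded:
  assumes "fundamental M a" "0 < i" "i < length a"
  shows "shift_bounded M a i"
  using assms by (auto simp: fundamental_def shift_bounded_def word_le_iff_lexordp_eq
      word_less_iff_lexordp)

lemma fundamental_intro:
  assumes "2 \<le> length w" "set w \<subseteq> {..M}"
    and "\<And>i. 0 < i \<Longrightarrow> i < length w \<Longrightarrow> shift_bounded M w i"
  shows "fundamental M w"
  using assms by (auto simp: fundamental_def shift_bounded_def word_le_iff_lexordp_eq
      word_less_iff_lexordp)

lemma fundamental_last_less_hd:
  assumes "fundamental M a" "2 \<le> length a"
  shows "last a < hd a" and "M - hd a \<le> last a"
proof -
  have "drop (length a - 1) a = [last a]"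
    using fundamentalD(1)[OF assms(1)] by (cases a rule: rev_cases) auto
  moreover have "take (length a - (length a - 1)) a = [hd a]"
    using assms by (cases a) (auto simp: Suc_le_eq)
  moreover have "shift_bounded M a (length a - 1)"
    using assms by (intro fundamental_shift_bounded) auto
  ultimately show "last a < hd a" "M - hd a \<le> last a"
    by (auto simp: shift_bounded_def word_refl_def)
qed

lemma fundamental_last_less:
  assumes "fundamental M a"
  shows "last a < M"
proof (cases "length a = 1")
  case True
  then show ?thesis using assms by (cases a) (auto simp: fundamental_def)
next
  case False
  then have "2 \<le> length a" using fundamentalD(1)[OF assms] by (cases a) (auto simp: Suc_le_eq)
  moreover have "hd a \<le> M" using fundamentalD[OF assms] by (auto dest: hd_in_set)
  ultimately show ?thesis using fundamental_last_less_hd[OF assms] by simp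
qed

lemma fundamental_word_refl_le:
  assumes "fundamental M a"
  shows "lexordp_eq (word_refl M a) a"
proof (cases "length a = 1")
  case True
  then show ?thesis using assms by (cases a) (auto simp: fundamental_def word_refl_def)
next
  case False
  then have "2 \<le> length a" using fundamentalD(1)[OF assms] by (cases a) (auto simp: Suc_le_eq)
  then have "M - hd a < hd a" using fundamental_last_less_hd[OF assms] by simp
  then show ?thesis using fundamentalD(1)[OF assms] by (cases a) (auto simp: word_refl_def)
qed

(* The length bound holds because a one-letter word is fundamental only for M \<ge> 2. *)
lemma fundamental_binary:
  assumes "fundamental 1 b"
  shows "2 \<le> length b" and "hd b = 1" and "last b = 0"
proof -
  show "2 \<le> length b" using assms by (cases b) (auto simp: fundamental_def Suc_le_eq)
  then show "hd b = 1" "last b = 0"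
    using fundamental_last_less_hd[OF assms] fundamental_last_less[OF assms] fundamentalD[OF assms]
    by (auto dest: hd_in_set)
qed

section \<open>Block words\<close>

(* The label L_a of an edge from a vertex with bit x to a vertex with bit y, where A has bit 1
   and Start, B have bit 0 (see label_a_eq_block below); L^* records the bit of the target. *)
definition block :: "nat \<Rightarrow> nat list \<Rightarrow> nat \<Rightarrow> nat \<Rightarrow> nat list" where
  "block M a x y =
     (if x = 0 then (if y = 0 then a else word_plus a)
      else word_refl M (if y = 0 then word_plus a else a))"

fun blocks :: "nat \<Rightarrow> nat list \<Rightarrow> nat list \<Rightarrow> nat list" where
  "blocks M a (x # y # c) = block M a x y @ blocks M a (y # c)"
| "blocks M a _ = []"

lemma length_block [simp]: "a \<noteq> [] \<Longrightarrow> length (block M a x y) = length a"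
  by (simp add: block_def)

lemma length_blocks: "a \<noteq> [] \<Longrightarrow> length (blocks M a c) = (length c - 1) * length a"
  by (induction c rule: induct_list012) auto

lemma drop_blocks:
  "a \<noteq> [] \<Longrightarrow> q < length c \<Longrightarrow> drop (q * length a) (blocks M a c) = blocks M a (drop q c)"
proof (induction q arbitrary: c)
  case (Suc q)
  then obtain x y c' where "c = x # y # c'" by (cases c; cases "tl c") auto
  then show ?case using Suc by simp
qed simp

lemma take_blocks:
  "a \<noteq> [] \<Longrightarrow> q < length c \<Longrightarrow> take (q * length a) (blocks M a c) = blocks M a (take (Suc q) c)"
proof (induction q arbitrary: c)
  case 0
  then show ?case by (cases c) auto
next
  case (Suc q)
  then obtain x y c' where "c = x # y # c'" by (cases c; cases "tl c") auto
  then show ?case using Suc by simp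
qed

lemma blocks_drop_eq_block_append:
  assumes "Suc q < length c"
  shows "blocks M a (drop q c) = block M a (c ! q) (c ! Suc q) @ blocks M a (drop (Suc q) c)"
proof -
  have "drop q c = c ! q # drop (Suc q) c" "drop (Suc q) c = c ! Suc q # drop (Suc (Suc q)) c"
    using assms by (simp_all add: Cons_nth_drop_Suc)
  then show ?thesis by simp
qed

lemma drop_blocks_within_block:
  assumes "a \<noteq> []" "Suc q < length c" "r < length a"
  shows "drop (q * length a + r) (blocks M a c) =
    drop r (block M a (c ! q) (c ! Suc q)) @ blocks M a (drop (Suc q) c)"
  using drop_blocks[OF assms(1), of q c] blocks_drop_eq_block_append[OF assms(2)] assms
  by (simp add: add.commute flip: drop_drop)

lemma blocks_zero_Cons:
  "c \<noteq> [] \<Longrightarrow> hd c \<noteq> 0 \<Longrightarrow> blocks M a (0 # c) = word_plus a @ blocks M a c"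
  by (cases c) (simp_all add: block_def)

lemma block_atMost: "set a \<subseteq> {..M} \<Longrightarrow> last a < M \<Longrightarrow> set (block M a x y) \<subseteq> {..M}"
  by (simp add: block_def word_plus_atMost word_refl_atMost)

lemma blocks_atMost: "set a \<subseteq> {..M} \<Longrightarrow> last a < M \<Longrightarrow> set (blocks M a c) \<subseteq> {..M}"
  by (induction c rule: induct_list012) (simp_all add: block_atMost)

lemma word_refl_block:
  "set a \<subseteq> {..M} \<Longrightarrow> last a < M \<Longrightarrow> word_refl M (block M a x y) = block M a (1 - x) (1 - y)"
  by (simp add: block_def word_refl_word_refl word_plus_atMost)

lemma word_refl_blocks:
  "set a \<subseteq> {..M} \<Longrightarrow> last a < M \<Longrightarrow> word_refl M (blocks M a c) = blocks M a (word_refl 1 c)"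
  by (induction c rule: induct_list012) (simp_all add: word_refl_append word_refl_block)

section \<open>Shifts of the block word of a fundamental word\<close>

context
  fixes M :: nat and a :: "nat list"
  assumes a: "fundamental M a"
begin

private lemmas a_nonempty = fundamentalD(1)[OF a]
  and a_atMost = fundamentalD(2)[OF a]
  and a_last_less = fundamental_last_less[OF a]
  and word_plus_a_atMost = word_plus_atMost[OF fundamentalD(2)[OF a] fundamental_last_less[OF a]]

lemma block_less_block_one: "ord_class.lexordp (block M a x 0) (block M a x 1)"
  using lexordp_word_plus[OF a_nonempty]
    lexordp_word_refl[of a "word_plus a" M] word_plus_a_atMost
  by (simp add: block_def a_nonempty)

lemma block_nonzero_le_block_zero:
  assumes "x \<noteq> 0"
  shows "ord_class.lexordp (block M a x y) (block M a 0 y') \<or>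
    block M a x y = block M a 0 y' \<and> y \<noteq> 0 \<and> y' = 0"
proof -
  have refl_plus: "ord_class.lexordp (block M a 1 0) (block M a 1 1)"
    and plus: "ord_class.lexordp (block M a 0 0) (block M a 0 1)"
    using block_less_block_one by blast+
  have "lexordp_eq (block M a 1 1) (block M a 0 0)"
    using fundamental_word_refl_le[OF a] by (simp add: block_def)
  then show ?thesis
    using assms refl_plus plus
    by (cases "y = 0"; cases "y' = 0")
      (auto simp: block_def lexordp_eq_conv_lexord intro: lexordp_trans)
qed

lemma blocks_Cons_less_blocks_Cons:
  "length u = length p \<Longrightarrow> set p \<subseteq> {..1} \<Longrightarrow> ord_class.lexordp u p \<Longrightarrow>
   ord_class.lexordp (blocks M a (x # u)) (blocks M a (x # p))"
proof (induction u p arbitrary: x rule: list_induct2)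
  case (Cons u1 u p1 p)
  show ?case
  proof (cases "u1 = p1")
    case True
    then show ?thesis using Cons by (simp add: lexordp_append_same_length a_nonempty)
  next
    case False
    then have "u1 = 0" "p1 = 1" using Cons.prems by auto
    then show ?thesis using block_less_block_one[of x]
      by (simp add: lexordp_append_same_length a_nonempty)
  qed
qed simp

lemma blocks_nonzero_Cons_le_blocks_zero_Cons:
  "length u = length p \<Longrightarrow> x \<noteq> 0 \<Longrightarrow>
   ord_class.lexordp (blocks M a (x # u)) (blocks M a (0 # p)) \<or>
   blocks M a (x # u) = blocks M a (0 # p) \<and> 0 \<notin> set u"
proof (induction u p arbitrary: x rule: list_induct2)
  case (Cons u1 u p1 p)
  then show ?case
    using block_nonzero_le_block_zero[OF Cons.prems, of u1 p1] Cons.IH[of u1]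
    by (auto simp: lexordp_append_same_length a_nonempty)
qed simp

lemma blocks_Cons_less_blocks_zero_Cons:
  assumes "length u = length p" "set p \<subseteq> {..1}" "ord_class.lexordp u p" "0 \<in> set u"
  shows "ord_class.lexordp (blocks M a (x # u)) (blocks M a (0 # p))"
proof (cases "x = 0")
  case True
  then show ?thesis using assms blocks_Cons_less_blocks_Cons by simp
next
  case False
  then show ?thesis using assms blocks_nonzero_Cons_le_blocks_zero_Cons[OF assms(1) False] by auto
qed

lemma blocks_Cons_le_blocks_zero_Cons:
  assumes "length u = length p" "set p \<subseteq> {..1}" "lexordp_eq u p"
  shows "lexordp_eq (blocks M a (x # u)) (blocks M a (0 # p))"
proof (cases "x = 0")
  case True
  then show ?thesis
    using assms blocks_Cons_less_blocks_Cons by (auto simp: lexordp_eq_conv_lexord)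
next
  case False
  then show ?thesis
    using blocks_nonzero_Cons_le_blocks_zero_Cons[OF assms(1) False]
    by (auto simp: lexordp_eq_conv_lexord)
qed

lemma shift_bounded_blocks_at_block_boundary:
  assumes b: "fundamental 1 b" and q: "0 < q" "q < length b"
  shows "shift_bounded M (blocks M a (0 # b)) (q * length a)"
proof -
  let ?w = "blocks M a (0 # b)" and ?x = "b ! (q - 1)"
  let ?u = "drop q b" and ?p = "take (length b - q) b"
  have b_bin: "set b \<subseteq> {..1}" using fundamentalD[OF b] by simp
  have lengths: "length ?u = length ?p" "length (word_refl 1 ?u) = length ?p" by simp_all
  have bits: "set ?u \<subseteq> {..1}" "set ?p \<subseteq> {..1}"
    using b_bin by (auto dest: in_set_dropD in_set_takeD)
  have shift_b: "lexordp_eq (word_refl 1 ?p) ?u" "ord_class.lexordp ?u ?p"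
    using fundamental_shift_bounded[OF b q] by (simp_all add: shift_bounded_def)
  have "0 \<in> set ?u"
    using fundamental_binary(3)[OF b] q last_in_set[of ?u] by simp
  have "drop q (0 # b) = ?x # ?u"
    using q by (cases q) (simp_all add: Cons_nth_drop_Suc)
  then have suffix: "drop (q * length a) ?w = blocks M a (?x # ?u)"
    using drop_blocks[OF a_nonempty, of q "0 # b"] q by simp
  have "length ?w - q * length a = (length b - q) * length a"
    by (simp add: length_blocks a_nonempty diff_mult_distrib)
  then have prefix: "take (length ?w - q * length a) ?w = blocks M a (0 # ?p)"
    using take_blocks[OF a_nonempty, of "length b - q" "0 # b"] q by simp
  have "ord_class.lexordp (blocks M a (?x # ?u)) (blocks M a (0 # ?p))"
    using blocks_Cons_less_blocks_zero_Cons lengths bits shift_b \<open>0 \<in> set ?u\<close> by blast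
  moreover have "lexordp_eq (word_refl 1 ?u) ?p"
    using lexordp_eq_word_refl_swap[OF shift_b(1)] lengths bits by simp
  then have "lexordp_eq (blocks M a ((1 - ?x) # word_refl 1 ?u)) (blocks M a (0 # ?p))"
    using blocks_Cons_le_blocks_zero_Cons lengths(2) bits(2) by blast
  then have "lexordp_eq (word_refl M (blocks M a (?x # ?u))) (blocks M a (0 # ?p))"
    by (simp add: word_refl_blocks a_atMost a_last_less)
  then have "lexordp_eq (word_refl M (blocks M a (0 # ?p))) (blocks M a (?x # ?u))"
    by (rule lexordp_eq_word_refl_swap)
      (simp_all add: length_blocks a_nonempty blocks_atMost a_atMost a_last_less)
  ultimately show ?thesis by (simp add: shift_bounded_def suffix prefix)
qed

lemma drop_block_le_take:
  assumes r: "0 < r" "r < length a"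
  shows "ord_class.lexordp (drop r (block M a x y)) (take (length a - r) a) \<or>
    drop r (block M a x y) = take (length a - r) a \<and> y \<noteq> 0"
proof -
  let ?u = "drop r a" and ?p = "take (length a - r) a"
  have shift_a: "lexordp_eq (word_refl M ?p) ?u" "ord_class.lexordp ?u ?p"
    using fundamental_shift_bounded[OF a r] by (simp_all add: shift_bounded_def)
  have u: "?u \<noteq> []" "length ?u = length ?p" using r by simp_all
  have bounds: "set ?u \<subseteq> {..M}" "set ?p \<subseteq> {..M}"
    using a_atMost by (auto dest: in_set_dropD in_set_takeD)
  have "set (word_plus ?u) \<subseteq> {..M}"
    using word_plus_atMost[OF bounds(1)] a_last_less r by simp
  have plus: "lexordp_eq (word_plus ?u) ?p"
    using lexordp_eq_word_plus_if_lexordp[OF u(2,1) shift_a(2)] .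
  have refl: "lexordp_eq (word_refl M ?u) ?p"
    using lexordp_eq_word_refl_swap[OF shift_a(1)] u bounds by simp
  have refl_plus: "ord_class.lexordp (word_refl M (word_plus ?u)) (word_refl M ?u)"
    using lexordp_word_refl[OF _ _ lexordp_word_plus[OF u(1)], of M] u
      \<open>set (word_plus ?u) \<subseteq> {..M}\<close> by simp
  have "drop r (word_plus a) = word_plus ?u" using r by (simp add: drop_word_plus)
  then show ?thesis
    using shift_a(2) plus refl refl_plus
    by (cases "x = 0"; cases "y = 0")
      (auto simp: block_def drop_word_refl lexordp_eq_conv_lexord intro: lexordp_trans)
qed

lemma take_block_less_drop_word_plus:
  assumes r: "0 < r" "r < length a" and "x \<noteq> 0"
  shows "ord_class.lexordp (take r (block M a x y)) (drop (length a - r) (word_plus a))"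
proof -
  let ?v = "drop (length a - r) a" and ?t = "take r a"
  have "lexordp_eq (word_refl M ?t) ?v"
    using fundamental_shift_bounded[OF a, of "length a - r"] r by (simp add: shift_bounded_def)
  moreover have "ord_class.lexordp ?v (word_plus ?v)" using r by (simp add: lexordp_word_plus)
  ultimately have "ord_class.lexordp (word_refl M ?t) (word_plus ?v)"
    by (auto simp: lexordp_eq_conv_lexord intro: lexordp_trans)
  moreover have "take r (block M a x y) = word_refl M ?t"
    using assms by (simp add: block_def take_word_refl take_word_plus)
  ultimately show ?thesis using r by (simp add: drop_word_plus)
qed

lemma block_straddle_less_word_plus:
  assumes r: "0 < r" "r < length a"
  shows "ord_class.lexordp (drop r (block M a x y) @ take r (block M a y z)) (word_plus a)"
proof -
  have "take (length a - r) a @ drop (length a - r) (word_plus a) = word_plus a"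
    using r take_word_plus[of "length a - r" a] append_take_drop_id[of "length a - r" "word_plus a"]
    by simp
  moreover have "ord_class.lexordp (drop r (block M a x y) @ take r (block M a y z))
      (take (length a - r) a @ drop (length a - r) (word_plus a))"
    using drop_block_le_take[OF r, of x y] take_block_less_drop_word_plus[OF r, of y z] r
    by (auto simp: lexordp_append_same_length a_nonempty)
  ultimately show ?thesis by simp
qed

lemma word_refl_take_le_drop_block:
  assumes r: "0 < r" "r < length a"
  shows "ord_class.lexordp (word_refl M (take (length a - r) a)) (drop r (block M a x y)) \<or>
    word_refl M (take (length a - r) a) = drop r (block M a x y) \<and> y = 0"
proof -
  let ?d = "drop r (block M a x y)" and ?p = "take (length a - r) a"
  have d: "set ?d \<subseteq> {..M}" "length ?d = length ?p"
    using block_atMost[OF a_atMost a_last_less] r a_nonempty by (auto dest: in_set_dropD)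
  have "word_refl M ?d = drop r (block M a (1 - x) (1 - y))"
    by (simp add: drop_word_refl[symmetric] word_refl_block a_atMost a_last_less)
  then have "ord_class.lexordp (word_refl M ?d) ?p \<or> word_refl M ?d = ?p \<and> y = 0"
    using drop_block_le_take[OF r, of "1 - x" "1 - y"] by auto
  then show ?thesis
    using lexordp_word_refl[of "word_refl M ?d" ?p M] word_refl_word_refl[OF d(1)] d(2)
      a_atMost r by (auto dest: in_set_takeD)
qed

lemma word_refl_word_plus_less_block_straddle:
  assumes r: "0 < r" "r < length a"
  shows "ord_class.lexordp (word_refl M (word_plus a))
    (drop r (block M a x y) @ take r (block M a y z))"
proof -
  let ?s = "drop r (block M a x y) @ take r (block M a y z)"
  have s: "set ?s \<subseteq> {..M}" "length ?s = length a"
    using block_atMost[OF a_atMost a_last_less] r a_nonempty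
    by (auto dest: in_set_dropD in_set_takeD)
  have "word_refl M ?s = drop r (block M a (1 - x) (1 - y)) @ take r (block M a (1 - y) (1 - z))"
    by (simp add: word_refl_append drop_word_refl[symmetric] take_word_refl[symmetric]
        word_refl_block a_atMost a_last_less)
  then have "ord_class.lexordp (word_refl M ?s) (word_plus a)"
    using block_straddle_less_word_plus[OF r] by simp
  then show ?thesis
    using lexordp_word_refl[of "word_refl M ?s" "word_plus a" M] word_refl_word_refl[OF s(1)] s(2)
      word_plus_a_atMost a_nonempty by simp
qed

lemma shift_bounded_blocks_inside_last_block:
  assumes b: "fundamental 1 b" and q: "Suc q = length b" and r: "0 < r" "r < length a"
  shows "shift_bounded M (blocks M a (0 # b)) (q * length a + r)"
proof -
  let ?w = "blocks M a (0 # b)" and ?i = "q * length a + r"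
  obtain c where b_eq: "b = c @ [0]"
    using fundamentalD(1)[OF b] fundamental_binary(3)[OF b] by (metis append_butlast_last_id)
  have q_eq: "q = length c" using q b_eq by simp
  have D: "drop ?i ?w = drop r (block M a ((0 # b) ! q) 0)"
    using drop_blocks_within_block[OF a_nonempty, of q "0 # b" r] r
    unfolding b_eq q_eq by (simp add: nth_append)
  have "length ?w - ?i = length a - r"
    using q[symmetric] by (simp add: length_blocks a_nonempty)
  moreover have "?w = word_plus a @ blocks M a b"
    using fundamentalD(1)[OF b] fundamental_binary(2)[OF b] by (simp add: blocks_zero_Cons)
  ultimately have T: "take (length ?w - ?i) ?w = take (length a - r) a"
    using r a_nonempty by (simp add: take_word_plus)
  show ?thesis
    using drop_block_le_take[OF r] word_refl_take_le_drop_block[OF r]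
    unfolding shift_bounded_def D T by (auto simp: lexordp_eq_conv_lexord)
qed

lemma shift_bounded_blocks_inside_inner_block:
  assumes b: "fundamental 1 b" and q: "Suc q < length b" and r: "0 < r" "r < length a"
  shows "shift_bounded M (blocks M a (0 # b)) (q * length a + r)"
proof -
  let ?w = "blocks M a (0 # b)" and ?i = "q * length a + r"
  let ?s = "drop r (block M a ((0 # b) ! q) (b ! q)) @ take r (block M a (b ! q) (b ! Suc q))"
  have D: "drop ?i ?w = ?s @ drop r (block M a (b ! q) (b ! Suc q)) @ blocks M a (drop (Suc q) b)"
    using drop_blocks_within_block[OF a_nonempty, of q "0 # b" r]
      blocks_drop_eq_block_append[OF q] q r by simp
  have "2 * length a \<le> (length b - q) * length a"
    using q by (intro mult_right_mono) auto
  then have "length a \<le> length ?w - ?i"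
    using r by (simp add: length_blocks a_nonempty diff_mult_distrib)
  moreover have "?w = word_plus a @ blocks M a b"
    using fundamentalD(1)[OF b] fundamental_binary(2)[OF b] by (simp add: blocks_zero_Cons)
  ultimately have T: "take (length ?w - ?i) ?w =
      word_plus a @ take (length ?w - ?i - length a) (blocks M a b)"
    using a_nonempty by simp
  have length_s: "length ?s = length (word_plus a)" using r a_nonempty by simp
  have "ord_class.lexordp (?s @ u) (word_plus a @ v)" for u v
    using block_straddle_less_word_plus[OF r] lexordp_append_same_length[OF length_s] by blast
  moreover have "ord_class.lexordp (word_refl M (word_plus a) @ v) (?s @ u)" for u v
    using word_refl_word_plus_less_block_straddle[OF r] length_s
      lexordp_append_same_length[of "word_refl M (word_plus a)" ?s] by simp
  ultimately show ?thesis
    unfolding shift_bounded_def D T word_refl_append by (simp add: lexordp_into_lexordp_eq)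
qed

lemma fundamental_blocks:
  assumes b: "fundamental 1 b"
  shows "fundamental M (blocks M a (0 # b))"
proof (rule fundamental_intro)
  let ?w = "blocks M a (0 # b)"
  have length_w: "length ?w = length b * length a"
    by (simp add: length_blocks a_nonempty)
  have "1 \<le> length a" using a_nonempty by (simp add: Suc_le_eq)
  then show "2 \<le> length ?w"
    unfolding length_w using mult_le_mono[OF fundamental_binary(1)[OF b]] by fastforce
  show "set ?w \<subseteq> {..M}" by (rule blocks_atMost[OF a_atMost a_last_less])
  fix i assume i: "0 < i" "i < length ?w"
  define q r where "q = i div length a" and "r = i mod length a"
  have i_eq: "i = q * length a + r" and r: "r < length a"
    using a_nonempty by (simp_all add: q_def r_def)
  have q: "q < length b" using i(2) length_w by (simp add: q_def less_mult_imp_div_less)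
  consider "r = 0" | "0 < r" "Suc q = length b" | "0 < r" "Suc q < length b"
    using q by linarith
  then show "shift_bounded M ?w i"
  proof cases
    case 1
    then have "0 < q" using i(1) i_eq by simp
    then show ?thesis using shift_bounded_blocks_at_block_boundary[OF b _ q] i_eq 1 by simp
  next
    case 2
    then show ?thesis using shift_bounded_blocks_inside_last_block[OF b _ _ r] i_eq by simp
  next
    case 3
    then show ?thesis using shift_bounded_blocks_inside_inner_block[OF b _ _ r] i_eq by simp
  qed
qed

end

section \<open>Paths in the graph G\<close>

fun vertex_bit :: "vertex \<Rightarrow> nat" where
  "vertex_bit VA = 1"
| "vertex_bit VB = 0"
| "vertex_bit Start = 0"

lemma label_a_eq_block: "label_a M a e = block M a (vertex_bit (esrc e)) (label_star e)"
  by (cases e) (simp_all add: block_def)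

lemma label_star_eq_vertex_bit: "label_star e = vertex_bit (etgt e)"
  by (cases e) simp_all

lemma is_path_Cons: "is_path (e # p) \<longleftrightarrow> p = [] \<or> etgt e = esrc (hd p) \<and> is_path p"
proof (cases p)
  case (Cons e' p')
  have "(\<forall>j. Suc j < length (e # p) \<longrightarrow> etgt ((e # p) ! j) = esrc ((e # p) ! Suc j)) \<longleftrightarrow>
    etgt e = esrc e' \<and> (\<forall>j. Suc j < length p \<longrightarrow> etgt (p ! j) = esrc (p ! Suc j))"
    unfolding Cons by (auto simp: All_less_Suc2)
  then show ?thesis using Cons by (simp add: is_path_def)
qed (simp add: is_path_def)

lemma concat_label_a_path:
  "is_path p \<Longrightarrow>
   concat (map (label_a M a) p) = blocks M a (vertex_bit (esrc (hd p)) # map label_star p)"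
proof (induction p)
  case (Cons e p)
  then show ?case
    by (cases p) (auto simp: is_path_Cons label_a_eq_block label_star_eq_vertex_bit)
qed (simp add: is_path_def)

fun edge_from :: "vertex \<Rightarrow> nat \<Rightarrow> edge" where
  "edge_from Start y = E0"
| "edge_from VA y = (if y = 0 then E1 else E4)"
| "edge_from VB y = (if y = 0 then E2 else E3)"

fun path_from :: "vertex \<Rightarrow> nat list \<Rightarrow> edge list" where
  "path_from v [] = []"
| "path_from v (y # ys) = edge_from v y # path_from (etgt (edge_from v y)) ys"

lemma esrc_edge_from [simp]: "esrc (edge_from v y) = v"
  by (cases v) simp_all

lemma is_path_path_from: "ys \<noteq> [] \<Longrightarrow> is_path (path_from v ys)"
proof (induction ys arbitrary: v)
  case (Cons y ys)
  then show ?case by (cases ys) (simp_all add: is_path_Cons)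
qed simp

lemma map_label_star_path_from:
  "set ys \<subseteq> {..1} \<Longrightarrow> v \<noteq> Start \<Longrightarrow> map label_star (path_from v ys) = ys"
proof (induction ys arbitrary: v)
  case (Cons y ys)
  have "etgt (edge_from v y) \<noteq> Start" by (cases v) auto
  then show ?case using Cons by (cases v) auto
qed simp

lemma compose_eq_blocks:
  assumes "set b \<subseteq> {..1}" "b \<noteq> []" "hd b = 1"
  shows "compose M a b = blocks M a (0 # b)"
  unfolding compose_def
proof (rule the_equality)
  obtain ys where b: "b = 1 # ys" using assms(2,3) by (cases b) auto
  let ?p = "path_from Start b"
  have "is_path ?p" "hd ?p = E0" "map label_star ?p = b"
    using is_path_path_from[OF assms(2), of Start] map_label_star_path_from[of ys VA] assms(1) b
    by simp_all
  then show "\<exists>p. is_path p \<and> hd p = E0 \<and> map label_star p = b \<and>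
      blocks M a (0 # b) = concat (map (label_a M a) p)"
    using concat_label_a_path by fastforce
next
  fix w
  assume "\<exists>p. is_path p \<and> hd p = E0 \<and> map label_star p = b \<and> w = concat (map (label_a M a) p)"
  then show "w = blocks M a (0 # b)" using concat_label_a_path by fastforce
qed

theorem lemma2p9:
  fixes M :: nat and a b :: "nat list"
  assumes "M \<ge> 1" and "fundamental M a" and "fundamental 1 b"
  shows "fundamental M (compose M a b)"
proof -
  have "compose M a b = blocks M a (0 # b)"
    using fundamentalD[OF assms(3)] fundamental_binary(2)[OF assms(3)]
    by (intro compose_eq_blocks) auto
  then show ?thesis using fundamental_blocks[OF assms(2,3)] by simp
qed

end
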